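(* Fix a positive real number $k$ and set $m=m(n)=\lceil n/k\rceil$. Then the rate $\frac{\log_2|C_{n,m}|}{\binom{n}{2}}$ of the community code $C_{n,m}$ tends to $0$ as $n\to\infty$.
   Context: For integers $n\geq 2$, $N=\binom{n}{2}$ and $1\leq m\leq n$, the community code $C_{n,m}\subseteq\mathbb{F}_2^N$ consists of exactly those binary vectors of length $N$ that are the upper-triangular (off-diagonal) part of the adjacency matrix of a simple undirected graph on the labeled vertex set $\{1,\ldots,n\}$ which is a disjoint union of cliques, each clique having at least $m$ vertices. The rate of $C_{n,m}$ is $\log_2|C_{n,m}|/N$. *)

theory Defs
  imports "HOL-Analysis.Analysis"
begin

text \<open>Coordinates of F_2^N, N = n choose 2: the upper-triangular positions (i,j), 1 <= i < j <= n.
  A binary vector of length N is identified with its support, a subset of these positions.\<close>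
definition positions :: "nat \<Rightarrow> (nat \<times> nat) set" where
  "positions n = {(i, j). 1 \<le> i \<and> i < j \<and> j \<le> n}"

definition adj :: "(nat \<times> nat) set \<Rightarrow> nat \<Rightarrow> nat \<Rightarrow> bool" where
  "adj S u v \<longleftrightarrow> (u, v) \<in> S \<or> (v, u) \<in> S"

text \<open>The graph is a disjoint union of cliques, each with at least m vertices:
  the relation "u = v or u adjacent to v" is transitive on {1..n}
  (i.e. every connected component is a clique), and every vertex lies in a
  clique (its closed neighbourhood) of at least m vertices.\<close>
definition clique_union :: "nat \<Rightarrow> nat \<Rightarrow> (nat \<times> nat) set \<Rightarrow> bool" where
  "clique_union n m S \<longleftrightarrow>
     (\<forall>u\<in>{1..n}. \<forall>v\<in>{1..n}. \<forall>w\<in>{1..n}.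
        adj S u v \<longrightarrow> adj S v w \<longrightarrow> u \<noteq> w \<longrightarrow> adj S u w) \<and>
     (\<forall>u\<in>{1..n}. m \<le> card {v\<in>{1..n}. v = u \<or> adj S u v})"

definition community_code :: "nat \<Rightarrow> nat \<Rightarrow> (nat \<times> nat) set set" where
  "community_code n m = {S. S \<subseteq> positions n \<and> clique_union n m S}"

definition code_rate :: "nat \<Rightarrow> nat \<Rightarrow> real" where
  "code_rate n m = log 2 (real (card (community_code n m))) / real (n choose 2)"

end

theory Submission
  imports Defs "HOL-Library.FuncSet" "HOL-Real_Asymp.Real_Asymp"
begin

text \<open>A codeword of C_{n,m} is determined by the partition of {1..n} into its cliques. Since every
  clique has at least m vertices there are at most n div m of them, so labelling each vertex
  with the index of its clique shows that |C_{n,m}| \<le> (n div m)^n. For m = \<lceil>n/k\<rceil> we have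
  n div m \<le> k, so log |C_{n,m}| = O(n), which is o(n choose 2).\<close>

lemma card_quotient_mult_le:
  assumes "finite A" "equiv A R" "\<And>X. X \<in> A // R \<Longrightarrow> m \<le> card X"
  shows "card (A // R) * m \<le> card A"
proof -
  have "card (A // R) * m = (\<Sum>X\<in>A // R. m)" by simp
  also have "\<dots> \<le> sum card (A // R)" using assms(3) by (rule sum_mono)
  also have "\<dots> = card (\<Union> (A // R))"
  proof (rule card_Union_disjoint[symmetric])
    show "pairwise disjnt (A // R)"
      using quotient_disj[OF assms(2)] by (auto simp: pairwise_def disjnt_def)
    show "finite X" if "X \<in> A // R" for X
      using in_quotient_imp_subset[OF assms(2) that] assms(1) by (rule finite_subset)
  qed
  also have "\<dots> = card A" using assms(2) by (simp add: Union_quotient)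
  finally show ?thesis .
qed

lemma equiv_kernel_of_labelling:
  assumes "finite A" "equiv A R"
  obtains f where "f \<in> A \<rightarrow>\<^sub>E {..<card (A // R)}"
    and "\<And>u v. u \<in> A \<Longrightarrow> v \<in> A \<Longrightarrow> (u, v) \<in> R \<longleftrightarrow> f u = f v"
proof -
  have "finite (A // R)" using assms(1) by (rule finite_quotient) (rule equiv_type[OF assms(2)])
  then obtain g where g: "bij_betw g (A // R) {0..<card (A // R)}"
    using ex_bij_betw_finite_nat by blast
  let ?f = "restrict (\<lambda>u. g (R `` {u})) A"
  show thesis
  proof
    show "?f \<in> A \<rightarrow>\<^sub>E {..<card (A // R)}"
      using bij_betw_apply[OF g] by (auto intro: quotientI)
    show "(u, v) \<in> R \<longleftrightarrow> ?f u = ?f v" if "u \<in> A" "v \<in> A" for u v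
    proof -
      have "?f u = ?f v \<longleftrightarrow> R `` {u} = R `` {v}"
        using that bij_betw_imp_inj_on[OF g] by (simp add: inj_on_eq_iff quotientI)
      also have "\<dots> \<longleftrightarrow> (u, v) \<in> R" using assms(2) that by (rule eq_equiv_class_iff)
      finally show ?thesis by simp
    qed
  qed
qed

definition clique_rel :: "nat \<Rightarrow> (nat \<times> nat) set \<Rightarrow> (nat \<times> nat) set" where
  "clique_rel n S = {(u, v) \<in> {1..n} \<times> {1..n}. u = v \<or> adj S u v}"

lemma equiv_clique_rel:
  assumes "clique_union n m S"
  shows "equiv {1..n} (clique_rel n S)"
proof (rule equivI)
  show "clique_rel n S \<subseteq> {1..n} \<times> {1..n}" by (auto simp: clique_rel_def)
  show "refl_on {1..n} (clique_rel n S)" by (rule refl_onI) (auto simp: clique_rel_def)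
  show "sym (clique_rel n S)" by (rule symI) (auto simp: clique_rel_def adj_def)
  have adj_trans: "adj S u w"
    if "u \<in> {1..n}" "v \<in> {1..n}" "w \<in> {1..n}" "adj S u v" "adj S v w" "u \<noteq> w" for u v w
    using assms that unfolding clique_union_def by blast
  show "trans (clique_rel n S)"
    by (rule transI) (auto simp: clique_rel_def intro: adj_trans)
qed

lemma card_clique_rel_class:
  assumes "clique_union n m S" "X \<in> {1..n} // clique_rel n S"
  shows "m \<le> card X"
proof -
  obtain u where u: "u \<in> {1..n}" and X: "X = clique_rel n S `` {u}"
    using assms(2) by (rule quotientE)
  have "X = {v \<in> {1..n}. v = u \<or> adj S u v}"
    using u unfolding X by (auto simp: clique_rel_def)
  then show ?thesis using assms(1) u unfolding clique_union_def by blast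
qed

lemma clique_rel_on_positions:
  assumes "S \<subseteq> positions n"
  shows "S = {(u, v) \<in> positions n. (u, v) \<in> clique_rel n S}"
  using assms by (auto simp: positions_def clique_rel_def adj_def)

lemma community_code_subset_labellings:
  assumes "0 < m"
  shows "community_code n m
    \<subseteq> (\<lambda>f. {(u, v) \<in> positions n. f u = f v}) ` ({1..n} \<rightarrow>\<^sub>E {..<n div m})"
proof
  fix S assume "S \<in> community_code n m"
  then have S: "S \<subseteq> positions n" "clique_union n m S" by (auto simp: community_code_def)
  note equiv = equiv_clique_rel[OF S(2)]
  obtain f where f: "f \<in> {1..n} \<rightarrow>\<^sub>E {..<card ({1..n} // clique_rel n S)}"
    and kernel: "\<And>u v. u \<in> {1..n} \<Longrightarrow> v \<in> {1..n} \<Longrightarrow> (u, v) \<in> clique_rel n S \<longleftrightarrow> f u = f v"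
    using equiv_kernel_of_labelling[OF _ equiv] by blast
  have "card ({1..n} // clique_rel n S) * m \<le> n"
    using card_quotient_mult_le[OF _ equiv card_clique_rel_class[OF S(2)]] by simp
  then have "card ({1..n} // clique_rel n S) \<le> n div m"
    using assms by (simp add: less_eq_div_iff_mult_less_eq)
  then have f_labelling: "f \<in> {1..n} \<rightarrow>\<^sub>E {..<n div m}"
    using f by (auto simp: PiE_iff)
  have "S = {(u, v) \<in> positions n. (u, v) \<in> clique_rel n S}"
    using S(1) by (rule clique_rel_on_positions)
  also have "\<dots> = {(u, v) \<in> positions n. f u = f v}"
    using kernel by (auto simp: positions_def)
  finally show "S \<in> (\<lambda>f. {(u, v) \<in> positions n. f u = f v}) ` ({1..n} \<rightarrow>\<^sub>E {..<n div m})"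
    using f_labelling by (rule image_eqI)
qed

lemma card_community_code_le:
  assumes "0 < m"
  shows "card (community_code n m) \<le> (n div m) ^ n"
proof -
  have "card (community_code n m) \<le> card ({1..n} \<rightarrow>\<^sub>E {..<n div m})"
    using community_code_subset_labellings[OF assms]
    by (meson card_image_le card_mono finite_PiE finite_atLeastAtMost finite_imageI
        finite_lessThan order_trans)
  also have "\<dots> = (n div m) ^ n" by (simp add: card_PiE)
  finally show ?thesis .
qed

lemma code_rate_nonneg: "0 \<le> code_rate n m"
  by (cases "card (community_code n m)") (auto simp: code_rate_def log_def)

lemma real_choose_two: "real (n choose 2) = real n * (real n - 1) / 2"
proof (cases n)
  case (Suc j)
  have "real (n choose 2) = real (n * j) / 2"
    unfolding choose_two Suc by (subst real_of_nat_div) auto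
  then show ?thesis by (simp add: Suc algebra_simps)
qed simp

lemma code_rate_le:
  assumes "0 < m" "2 \<le> n" "1 \<le> K" "real (n div m) \<le> K"
  shows "code_rate n m \<le> 2 * log 2 K / (real n - 1)"
proof -
  have "log 2 (card (community_code n m)) \<le> real n * log 2 K"
  proof (cases "card (community_code n m) = 0")
    case False
    have "real (card (community_code n m)) \<le> real (n div m) ^ n"
      using card_community_code_le[OF assms(1)] by (metis of_nat_le_iff of_nat_power)
    also have "\<dots> \<le> K ^ n" using assms(4) by (rule power_mono) simp
    finally have "log 2 (card (community_code n m)) \<le> log 2 (K ^ n)"
      using False assms(3) by (intro log_mono) auto
    then show ?thesis using assms(3) by (simp add: log_nat_power)
  qed (use assms(3) in \<open>simp add: log_def\<close>)
  then have "code_rate n m \<le> real n * log 2 K / (real n * (real n - 1) / 2)"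
    unfolding code_rate_def real_choose_two using assms(2) by (intro divide_right_mono) auto
  also have "\<dots> = 2 * log 2 K / (real n - 1)" using assms(2) by (simp add: field_simps)
  finally show ?thesis .
qed

lemma div_nat_ceiling_le:
  fixes k :: real
  assumes "0 < k"
  shows "real (n div nat \<lceil>real n / k\<rceil>) \<le> k"
proof (cases "n = 0")
  case False
  define m where "m = nat \<lceil>real n / k\<rceil>"
  have "real n / k \<le> real m" unfolding m_def by (rule real_nat_ceiling_ge)
  moreover have "0 < m" using False assms by (simp add: m_def)
  ultimately have "real n / real m \<le> k"
    using assms by (simp add: pos_divide_le_eq mult.commute)
  with of_nat_div_le_of_nat have "real (n div m) \<le> k" by (rule order_trans)
  then show ?thesis by (simp add: m_def)
qed (use assms in simp)

theorem corollary1: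
  fixes k :: real
  assumes "k > 0"
  shows "(\<lambda>n. code_rate n (nat \<lceil>real n / k\<rceil>)) \<longlonglongrightarrow> 0"
proof (rule tendsto_sandwich)
  define K where "K = max 1 k"
  show "\<forall>\<^sub>F n in sequentially. 0 \<le> code_rate n (nat \<lceil>real n / k\<rceil>)"
    by (simp add: code_rate_nonneg)
  show "\<forall>\<^sub>F n in sequentially. code_rate n (nat \<lceil>real n / k\<rceil>) \<le> 2 * log 2 K / (real n - 1)"
  proof (rule eventually_sequentiallyI[of 2])
    fix n :: nat assume "2 \<le> n"
    define m where "m = nat \<lceil>real n / k\<rceil>"
    have "0 < m" using \<open>2 \<le> n\<close> assms by (simp add: m_def)
    moreover have "real (n div m) \<le> k" unfolding m_def using assms by (rule div_nat_ceiling_le)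
    ultimately show "code_rate n m \<le> 2 * log 2 K / (real n - 1)"
      using code_rate_le[OF _ \<open>2 \<le> n\<close>] by (simp add: K_def)
  qed
  show "(\<lambda>n. 2 * log 2 K / (real n - 1)) \<longlonglongrightarrow> 0" by real_asymp
qed (rule tendsto_const)

end
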